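(* Let $\alpha,a,b>0$ with $\alpha\le a<2\alpha$ and $ab\in\left[\frac{M-1}{M},\frac{M}{M+1}\right[$ for some integer $M\ge2$, and let $\kappa$ be the largest integer with $(1-ab)\kappa\le b\alpha$. Let $h:\mathbb{R}\to\mathbb{C}$ satisfy $h(x)=0$ for all $$x\notin -\Big(\bigcup_{k=1}^{\kappa}\big[\tfrac{k}{b},ak+\alpha\big]\Big)\cup[-\alpha,\alpha]\cup\bigcup_{k=1}^{\kappa}\big[\tfrac{k}{b},ak+\alpha\big],$$ where $-S=\{-s:s\in S\}$ and an empty union is empty. Then: (a) $h(x)=h(x+a)=0$ for every $n\in\{1,\dots,\kappa\}$ and $x\in\,]\alpha+a(n-1),\frac{n}{b}[$, and for every $n\in\{-1,\dots,-\kappa\}$ and $x\in\,]\frac{n}{b}-a,an-\alpha[$; (b) $h(x)=h(x+a)=0$ for every $n\in\{\pm(\kappa+1),\dots,\pm(M-1)\}$ and $x\in[\frac{n}{b}-a,\frac{n}{b}]$. *)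

theory Defs
  imports Complex_Main
begin

definition pos_part :: "real \<Rightarrow> real \<Rightarrow> real \<Rightarrow> int \<Rightarrow> real set" where
  "pos_part \<alpha> a b \<kappa> = (\<Union>k\<in>{1..\<kappa>}. {real_of_int k / b .. a * real_of_int k + \<alpha>})"

definition supp_set :: "real \<Rightarrow> real \<Rightarrow> real \<Rightarrow> int \<Rightarrow> real set" where
  "supp_set \<alpha> a b \<kappa> = uminus ` pos_part \<alpha> a b \<kappa> \<union> {-\<alpha>..\<alpha>} \<union> pos_part \<alpha> a b \<kappa>"

end

theory Submission
  imports Defs
begin

text \<open>Every interval in question is either a gap between two consecutive pieces
  \<open>[k/b, a k + \<alpha>]\<close> of the support (these pieces are ordered since \<open>a \<le> 1/b\<close>, so
  translating such a gap by \<open>a\<close> lands in the next gap) or lies beyond the last piece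
  \<open>k = \<kappa>\<close>; the maximality of \<open>\<kappa>\<close> says exactly that \<open>a n + \<alpha> < n/b\<close> for \<open>n > \<kappa>\<close>.
  The support is symmetric, and \<open>x \<mapsto> -x - a\<close> swaps the pair \<open>x, x + a\<close>, which reduces
  the negative intervals to the positive ones.\<close>

lemma uminus_mem_supp_set_iff: "-x \<in> supp_set \<alpha> a b \<kappa> \<longleftrightarrow> x \<in> supp_set \<alpha> a b \<kappa>"
  unfolding supp_set_def by (auto simp: image_iff) (metis minus_minus)+

lemma pos_part_pos:
  assumes "0 < b" "x \<in> pos_part \<alpha> a b \<kappa>"
  shows "0 < x"
proof -
  obtain k :: int where "1 \<le> k" "real_of_int k / b \<le> x"
    using assms(2) unfolding pos_part_def by auto
  moreover have "0 < real_of_int k / b" if "1 \<le> k" for k :: int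
    using that assms(1) by simp
  ultimately show ?thesis by fastforce
qed

lemma notin_supp_set_if_notin_pos_part:
  assumes "0 \<le> \<alpha>" "0 < b" "\<alpha> < x" "x \<notin> pos_part \<alpha> a b \<kappa>"
  shows "x \<notin> supp_set \<alpha> a b \<kappa>"
proof -
  have "-x \<notin> pos_part \<alpha> a b \<kappa>"
    using pos_part_pos[OF assms(2), of "-x"] assms(1,3) by auto
  hence "x \<notin> uminus ` pos_part \<alpha> a b \<kappa>" by force
  thus ?thesis using assms(3,4) unfolding supp_set_def by auto
qed

lemma notin_pos_part_gap:
  fixes n :: int
  assumes "0 \<le> a" "0 < b" "a * b \<le> 1"
    and "\<alpha> + a * (real_of_int n - 1) < x" "x < real_of_int n / b"
  shows "x \<notin> pos_part \<alpha> a b \<kappa>" "x + a \<notin> pos_part \<alpha> a b \<kappa>"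
proof -
  have "a \<le> 1 / b" using assms(2,3) by (simp add: field_simps)
  hence shift: "real_of_int n / b + a \<le> (real_of_int n + 1) / b"
    by (simp add: add_divide_distrib)
  have mono_a: "a * real_of_int k \<le> a * real_of_int m" if "k \<le> m" for k m :: int
    using that assms(1) by (simp add: mult_left_mono)
  have mono_b: "real_of_int k / b \<le> real_of_int m / b" if "k \<le> m" for k m :: int
    using that assms(2) by (simp add: divide_right_mono)
  have "\<not> (real_of_int k / b \<le> x \<and> x \<le> a * real_of_int k + \<alpha>)" for k
    using mono_a[of k "n - 1"] mono_b[of n k] assms(4,5) by (cases "k \<le> n - 1") auto
  thus "x \<notin> pos_part \<alpha> a b \<kappa>" unfolding pos_part_def by auto
  have "\<not> (real_of_int k / b \<le> x + a \<and> x + a \<le> a * real_of_int k + \<alpha>)" for k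
    using mono_a[of k n] mono_b[of "n + 1" k] shift assms(4,5)
    by (cases "k \<le> n") (auto simp: algebra_simps)
  thus "x + a \<notin> pos_part \<alpha> a b \<kappa>" unfolding pos_part_def by auto
qed

lemma notin_pos_part_above:
  assumes "0 \<le> a" "a * real_of_int \<kappa> + \<alpha> < x"
  shows "x \<notin> pos_part \<alpha> a b \<kappa>"
proof -
  have "a * real_of_int k \<le> a * real_of_int \<kappa>" if "k \<le> \<kappa>" for k
    using that assms(1) by (simp add: mult_left_mono)
  thus ?thesis using assms(2) unfolding pos_part_def by fastforce
qed

lemma gap_notin_supp_set:
  fixes n :: int
  assumes "0 \<le> \<alpha>" "0 \<le> a" "0 < b" "a * b \<le> 1" "1 \<le> n"
    and "\<alpha> + a * (real_of_int n - 1) < x" "x < real_of_int n / b"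
  shows "x \<notin> supp_set \<alpha> a b \<kappa> \<and> x + a \<notin> supp_set \<alpha> a b \<kappa>"
proof -
  have "0 \<le> a * (real_of_int n - 1)" using assms(2,5) by simp
  hence "\<alpha> < x" "\<alpha> < x + a" using assms(2,6) by linarith+
  thus ?thesis
    using notin_pos_part_gap[OF assms(2-4,6,7)] notin_supp_set_if_notin_pos_part assms(1,3)
    by blast
qed

lemma piece_empty_above_kappa:
  fixes n :: int
  assumes "0 < b" "\<forall>k::int. (1 - a * b) * real_of_int k \<le> b * \<alpha> \<longrightarrow> k \<le> \<kappa>" "\<kappa> < n"
  shows "a * real_of_int n + \<alpha> < real_of_int n / b"
proof -
  have "\<not> (1 - a * b) * real_of_int n \<le> b * \<alpha>"
    using assms(2,3) by force
  hence "b * (a * real_of_int n + \<alpha>) < real_of_int n"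
    by (simp add: algebra_simps)
  thus ?thesis using assms(1) by (simp add: field_simps)
qed

lemma beyond_last_piece_notin_supp_set:
  fixes n :: int
  assumes "0 \<le> \<alpha>" "0 \<le> a" "0 < b" "0 \<le> \<kappa>"
    and "\<forall>k::int. (1 - a * b) * real_of_int k \<le> b * \<alpha> \<longrightarrow> k \<le> \<kappa>" "\<kappa> < n"
    and "real_of_int n / b - a \<le> x"
  shows "x \<notin> supp_set \<alpha> a b \<kappa> \<and> x + a \<notin> supp_set \<alpha> a b \<kappa>"
proof -
  have "a * real_of_int \<kappa> \<le> a * (real_of_int n - 1)"
    using assms(2,6) by (simp add: mult_left_mono)
  moreover have "0 \<le> a * real_of_int \<kappa>" using assms(2,4) by simp
  ultimately have "a * real_of_int \<kappa> + \<alpha> < x" "\<alpha> < x"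
    using piece_empty_above_kappa[OF assms(3,5,6)] assms(7) by (simp_all add: algebra_simps)
  moreover from this have "a * real_of_int \<kappa> + \<alpha> < x + a" "\<alpha> < x + a"
    using assms(2) by linarith+
  ultimately show ?thesis
    using notin_pos_part_above[OF assms(2)] notin_supp_set_if_notin_pos_part assms(1,3)
    by blast
qed

lemma reflect_pair_notin_supp_set:
  assumes "-x - a \<notin> supp_set \<alpha> a b \<kappa> \<and> -x - a + a \<notin> supp_set \<alpha> a b \<kappa>"
  shows "x \<notin> supp_set \<alpha> a b \<kappa> \<and> x + a \<notin> supp_set \<alpha> a b \<kappa>"
  using assms uminus_mem_supp_set_iff[of x] uminus_mem_supp_set_iff[of "x + a"] by simp

lemma neg_gap_notin_supp_set:
  fixes n :: int
  assumes "0 \<le> \<alpha>" "0 \<le> a" "0 < b" "a * b \<le> 1" "n \<le> -1"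
    and "real_of_int n / b - a < x" "x < a * real_of_int n - \<alpha>"
  shows "x \<notin> supp_set \<alpha> a b \<kappa> \<and> x + a \<notin> supp_set \<alpha> a b \<kappa>"
proof (rule reflect_pair_notin_supp_set, rule gap_notin_supp_set[OF assms(1-4), of "-n"])
  show "1 \<le> -n" using assms(5) by simp
  have "a * (real_of_int (-n) - 1) = - (a * real_of_int n) - a"
    "real_of_int (-n) / b = - (real_of_int n / b)"
    by (simp_all add: algebra_simps)
  thus "\<alpha> + a * (real_of_int (-n) - 1) < -x - a" "-x - a < real_of_int (-n) / b"
    using assms(6,7) by linarith+
qed

lemma neg_beyond_last_piece_notin_supp_set:
  fixes n :: int
  assumes "0 \<le> \<alpha>" "0 \<le> a" "0 < b" "0 \<le> \<kappa>"
    and "\<forall>k::int. (1 - a * b) * real_of_int k \<le> b * \<alpha> \<longrightarrow> k \<le> \<kappa>" "n < -\<kappa>"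
    and "x \<le> real_of_int n / b"
  shows "x \<notin> supp_set \<alpha> a b \<kappa> \<and> x + a \<notin> supp_set \<alpha> a b \<kappa>"
proof (rule reflect_pair_notin_supp_set, rule beyond_last_piece_notin_supp_set[OF assms(1-5)])
  show "\<kappa> < -n" using assms(6) by simp
  show "real_of_int (-n) / b - a \<le> -x - a" using assms(7) by simp
qed

theorem lemma3p3:
  fixes \<alpha> a b :: real and M \<kappa> :: int and h :: "real \<Rightarrow> complex"
  assumes "\<alpha> > 0" "a > 0" "b > 0"
    and "\<alpha> \<le> a" "a < 2 * \<alpha>"
    and "M \<ge> 2"
    and "(real_of_int M - 1) / real_of_int M \<le> a * b" "a * b < real_of_int M / (real_of_int M + 1)"
    and "(1 - a * b) * real_of_int \<kappa> \<le> b * \<alpha>"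
    and "\<forall>k::int. (1 - a * b) * real_of_int k \<le> b * \<alpha> \<longrightarrow> k \<le> \<kappa>"
    and "\<forall>x. x \<notin> supp_set \<alpha> a b \<kappa> \<longrightarrow> h x = 0"
  shows "(\<forall>n\<in>{1..\<kappa>}. \<forall>x\<in>{\<alpha> + a * (real_of_int n - 1) <..< real_of_int n / b}.
             h x = 0 \<and> h (x + a) = 0)
       \<and> (\<forall>n\<in>{-\<kappa>..-1}. \<forall>x\<in>{real_of_int n / b - a <..< a * real_of_int n - \<alpha>}.
             h x = 0 \<and> h (x + a) = 0)
       \<and> (\<forall>n\<in>{\<kappa>+1..M-1} \<union> {-(M-1)..-(\<kappa>+1)}. \<forall>x\<in>{real_of_int n / b - a .. real_of_int n / b}.
             h x = 0 \<and> h (x + a) = 0)"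
proof -
  have "real_of_int M / (real_of_int M + 1) < 1" using assms(6) by simp
  hence ab: "a * b \<le> 1" using assms(8) by linarith
  have \<kappa>: "0 \<le> \<kappa>" using assms(10)[rule_format, of 0] assms(1,3) by simp
  note \<alpha> = less_imp_le[OF assms(1)] and a = less_imp_le[OF assms(2)]
  note gap = gap_notin_supp_set[OF \<alpha> a assms(3) ab]
    and neg_gap = neg_gap_notin_supp_set[OF \<alpha> a assms(3) ab]
    and beyond = beyond_last_piece_notin_supp_set[OF \<alpha> a assms(3) \<kappa> assms(10)]
    and neg_beyond = neg_beyond_last_piece_notin_supp_set[OF \<alpha> a assms(3) \<kappa> assms(10)]
  have "\<forall>n\<in>{1..\<kappa>}. \<forall>x\<in>{\<alpha> + a * (real_of_int n - 1) <..< real_of_int n / b}.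
      x \<notin> supp_set \<alpha> a b \<kappa> \<and> x + a \<notin> supp_set \<alpha> a b \<kappa>"
    using gap by auto
  moreover have "\<forall>n\<in>{-\<kappa>..-1}. \<forall>x\<in>{real_of_int n / b - a <..< a * real_of_int n - \<alpha>}.
      x \<notin> supp_set \<alpha> a b \<kappa> \<and> x + a \<notin> supp_set \<alpha> a b \<kappa>"
    using neg_gap by auto
  moreover have "\<forall>n\<in>{\<kappa>+1..M-1} \<union> {-(M-1)..-(\<kappa>+1)}. \<forall>x\<in>{real_of_int n / b - a .. real_of_int n / b}.
      x \<notin> supp_set \<alpha> a b \<kappa> \<and> x + a \<notin> supp_set \<alpha> a b \<kappa>"
  proof (intro ballI)
    fix n x assume "n \<in> {\<kappa>+1..M-1} \<union> {-(M-1)..-(\<kappa>+1)}" "x \<in> {real_of_int n / b - a .. real_of_int n / b}"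
    thus "x \<notin> supp_set \<alpha> a b \<kappa> \<and> x + a \<notin> supp_set \<alpha> a b \<kappa>"
      using beyond[of n x] neg_beyond[of n x] by auto
  qed
  ultimately show ?thesis using assms(11) by blast
qed

end
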